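(* Let $D\subset\mathbb R^d$ be a domain, $V=H_0^1(D)$, $\mathcal V=L_2(Y,V,\sigma)$, and let $B\colon\mathcal V\to\mathcal V'$ be given by $\langle Bv,w\rangle=\sum_{\nu\in\mathcal F}\sum_{\nu'\in\mathcal F}\int_D[a]_{\nu\nu'}\nabla[v]_{\nu'}\cdot\nabla[w]_\nu\,dx$ with functions $[a]_{\nu\nu'}\in L_\infty(D)$ satisfying $[a]_{\nu\nu'}=[a]_{\nu'\nu}$. Then $\|B\|_{\mathcal V\to\mathcal V'}\le\max_{\nu\in\mathcal F}\Bigl\|\sum_{\nu'\in\mathcal F}|[a]_{\nu\nu'}|\Bigr\|_{L_\infty(D)}.$
   Context: $Y=[-1,1]^{\mathcal M}$ for a countable index set $\mathcal M$, $\sigma$ the uniform product probability measure on $Y$, $\mathcal F=\{\nu\in\mathbb N_0^{\mathcal M}:\#\operatorname{supp}\nu<\infty\}$, $L_\nu(y)=\prod_\mu L_{\nu_\mu}(y_\mu)$ with $L_k$ the Legendre polynomials orthonormal w.r.t. $dy/2$ on $[-1,1]$, and $[v]_\nu=\int_Y v(y)L_\nu(y)\,d\sigma(y)$. The norm on $\mathcal V$ is $\|v\|_{\mathcal V}^2=\sum_\nu\|\nabla[v]_\nu\|_{L_2(D)}^2$. *)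

theory Defs
  imports "HOL-Analysis.Analysis"
begin

fun dderiv :: "'d::euclidean_space list \<Rightarrow> ('d \<Rightarrow> real) \<Rightarrow> 'd \<Rightarrow> real" where
  "dderiv [] f = f"
| "dderiv (e # es) f = (\<lambda>x. frechet_derivative (dderiv es f) (at x) e)"

definition smooth :: "('d::euclidean_space \<Rightarrow> real) \<Rightarrow> bool" where
  "smooth f \<longleftrightarrow> (\<forall>es. (\<forall>x. dderiv es f differentiable at x) \<and> continuous_on UNIV (dderiv es f))"

definition test_fun :: "'d::euclidean_space set \<Rightarrow> ('d \<Rightarrow> real) \<Rightarrow> bool" where
  "test_fun D \<phi> \<longleftrightarrow> smooth \<phi> \<and> compact (closure {x. \<phi> x \<noteq> 0}) \<and> closure {x. \<phi> x \<noteq> 0} \<subseteq> D"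

definition grad :: "('d::euclidean_space \<Rightarrow> real) \<Rightarrow> 'd \<Rightarrow> 'd" where
  "grad f x = (\<Sum>b\<in>Basis. frechet_derivative f (at x) b *\<^sub>R b)"

definition sqint :: "'d::euclidean_space set \<Rightarrow> ('d \<Rightarrow> 'b::euclidean_space) \<Rightarrow> bool" where
  "sqint D f \<longleftrightarrow> f \<in> borel_measurable (lebesgue_on D) \<and> integrable (lebesgue_on D) (\<lambda>x. (norm (f x))\<^sup>2)"

text \<open>u \<in> H_0^1(D) with (weak) gradient g: u, g square integrable on D and
  (u, g) is the H^1-limit of (phi_n, grad phi_n) for test functions phi_n.\<close>
definition H01 :: "'d::euclidean_space set \<Rightarrow> ('d \<Rightarrow> real) \<Rightarrow> ('d \<Rightarrow> 'd) \<Rightarrow> bool" where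
  "H01 D u g \<longleftrightarrow> sqint D u \<and> sqint D g \<and>
     (\<exists>\<phi>::nat \<Rightarrow> 'd \<Rightarrow> real. (\<forall>n. test_fun D (\<phi> n)) \<and>
        (\<lambda>n. integral\<^sup>L (lebesgue_on D) (\<lambda>x. (\<phi> n x - u x)\<^sup>2)) \<longlonglongrightarrow> 0 \<and>
        (\<lambda>n. integral\<^sup>L (lebesgue_on D) (\<lambda>x. (norm (grad (\<phi> n) x - g x))\<^sup>2)) \<longlonglongrightarrow> 0)"

definition FF :: "('m \<Rightarrow> nat) set" where
  "FF = {\<nu>. finite {\<mu>. \<nu> \<mu> \<noteq> 0}}"

text \<open>An element of the Bochner space, represented by its Legendre coefficients
  [v]_nu \<in> H_0^1(D) (with gradients), square summable in the V-norm.\<close>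
definition inVV :: "'d::euclidean_space set \<Rightarrow> (('m \<Rightarrow> nat) \<Rightarrow> 'd \<Rightarrow> real) \<Rightarrow> (('m \<Rightarrow> nat) \<Rightarrow> 'd \<Rightarrow> 'd) \<Rightarrow> bool" where
  "inVV D u g \<longleftrightarrow> (\<forall>\<nu>\<in>FF. H01 D (u \<nu>) (g \<nu>)) \<and>
     (\<lambda>\<nu>. integral\<^sup>L (lebesgue_on D) (\<lambda>x. (norm (g \<nu> x))\<^sup>2)) summable_on FF"

definition VVnorm :: "'d::euclidean_space set \<Rightarrow> (('m \<Rightarrow> nat) \<Rightarrow> 'd \<Rightarrow> 'd) \<Rightarrow> real" where
  "VVnorm D g = sqrt (\<Sum>\<^sub>\<infinity>\<nu>\<in>FF. integral\<^sup>L (lebesgue_on D) (\<lambda>x. (norm (g \<nu> x))\<^sup>2))"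

definition Bform :: "'d::euclidean_space set \<Rightarrow> (('m \<Rightarrow> nat) \<Rightarrow> ('m \<Rightarrow> nat) \<Rightarrow> 'd \<Rightarrow> real)
    \<Rightarrow> (('m \<Rightarrow> nat) \<Rightarrow> 'd \<Rightarrow> 'd) \<Rightarrow> (('m \<Rightarrow> nat) \<Rightarrow> 'd \<Rightarrow> 'd) \<Rightarrow> real" where
  "Bform D a gv gw = (\<Sum>\<^sub>\<infinity>\<nu>\<in>FF. \<Sum>\<^sub>\<infinity>\<nu>'\<in>FF.
      integral\<^sup>L (lebesgue_on D) (\<lambda>x. a \<nu> \<nu>' x * (gv \<nu>' x \<bullet> gw \<nu> x)))"

definition Linf :: "'d::euclidean_space set \<Rightarrow> ('d \<Rightarrow> real) \<Rightarrow> bool" where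
  "Linf D f \<longleftrightarrow> f \<in> borel_measurable (lebesgue_on D) \<and> (\<exists>C. AE x in lebesgue_on D. \<bar>f x\<bar> \<le> C)"

end

theory Submission
  imports Defs
begin

text \<open>A Schur test. Writing \<open>c\<^sub>\<nu>\<^sub>\<nu>' = \<integral>\<^sub>D a\<^sub>\<nu>\<^sub>\<nu>' \<nabla>v\<^sub>\<nu>' \<cdot> \<nabla>w\<^sub>\<nu>\<close>, Cauchy-Schwarz and
  the AM-GM inequality give, for every \<open>t > 0\<close>,
  \<open>\<Sum>\<^sub>\<nu>\<Sum>\<^sub>\<nu>' |c\<^sub>\<nu>\<^sub>\<nu>'| \<le> t/2 \<Sum>\<^sub>\<nu>\<Sum>\<^sub>\<nu>' \<integral>\<^sub>D |a\<^sub>\<nu>\<^sub>\<nu>'| |\<nabla>v\<^sub>\<nu>'|\<^sup>2 + 1/(2t) \<Sum>\<^sub>\<nu>\<Sum>\<^sub>\<nu>' \<integral>\<^sub>D |a\<^sub>\<nu>\<^sub>\<nu>'| |\<nabla>w\<^sub>\<nu>|\<^sup>2\<close>.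
  Summing first over the index that does not carry the gradient (in the first term after using
  the symmetry of \<open>a\<close>), the row-sum bound \<open>M\<close> turns the right-hand side into
  \<open>M (t/2 \<parallel>v\<parallel>\<^sup>2 + 1/(2t) \<parallel>w\<parallel>\<^sup>2)\<close>, whose infimum over \<open>t\<close> is \<open>M \<parallel>v\<parallel> \<parallel>w\<parallel>\<close>.
  The series are handled as nonnegative integrals over counting measures: there Tonelli's theorem
  exchanges sums and integrals, and finiteness of the bound gives the absolute summability of the
  real series in \<open>Bform\<close>.\<close>

lemma ennreal_abs_integral_le_nn_integral:
  fixes f :: "'a \<Rightarrow> real"
  shows "ennreal \<bar>integral\<^sup>L M f\<bar> \<le> (\<integral>\<^sup>+x. ennreal \<bar>f x\<bar> \<partial>M)"
  using integral_norm_bound_ennreal[of M f] by (cases "integrable M f") (auto simp: not_integrable_integral_eq)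

lemma nn_integral_count_space_eq_infsum:
  fixes g :: "'i \<Rightarrow> real"
  assumes "g summable_on A" and "\<And>x. x \<in> A \<Longrightarrow> 0 \<le> g x"
  shows "(\<integral>\<^sup>+x. ennreal (g x) \<partial>count_space A) = ennreal (infsum g A)"
proof -
  have "(\<lambda>x. norm (g x)) summable_on A"
    using assms by (subst summable_on_cong[where g = g]) auto
  then have "Infinite_Set_Sum.abs_summable_on g A"
    using abs_summable_equivalent by blast
  then show ?thesis
    using assms(2) by (simp add: nn_integral_conv_infsetsum infsetsum_infsum)
qed

lemma nn_integral_count_space_le_if_infsum_le:
  fixes g :: "'i \<Rightarrow> real"
  assumes "(\<Sum>\<^sub>\<infinity>x\<in>A. ennreal (g x)) \<le> ennreal M" and "\<And>x. x \<in> A \<Longrightarrow> 0 \<le> g x" and "0 \<le> M"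
  shows "(\<integral>\<^sup>+x. ennreal (g x) \<partial>count_space A) \<le> ennreal M"
proof -
  have finite_sums: "sum g F \<le> M" if "finite F" "F \<subseteq> A" for F
  proof -
    have "ennreal (sum g F) = (\<Sum>x\<in>F. ennreal (g x))"
      using that assms(2) by (subst sum_ennreal[symmetric]) auto
    also have "\<dots> \<le> (\<Sum>\<^sub>\<infinity>x\<in>A. ennreal (g x))"
      using that by (subst nonneg_infsum_complete) (auto intro!: SUP_upper)
    also have "\<dots> \<le> ennreal M"
      by (rule assms(1))
    finally show ?thesis
      using assms(3) by (simp add: ennreal_le_iff)
  qed
  have summable: "g summable_on A"
    using assms(2) finite_sums by (intro nonneg_bdd_above_summable_on) (auto simp: bdd_above_def)
  have "infsum g A \<le> M"
    using summable finite_sums by (rule infsum_le_finite_sums)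
  then show ?thesis
    using nn_integral_count_space_eq_infsum[OF summable assms(2)] by (simp add: ennreal_leI)
qed

lemma abs_summable_on_if_nn_integral_finite:
  fixes g :: "'i \<Rightarrow> real"
  assumes "(\<integral>\<^sup>+x. ennreal \<bar>g x\<bar> \<partial>count_space A) \<noteq> \<infinity>"
  shows "(\<lambda>x. \<bar>g x\<bar>) summable_on A"
proof -
  have "integrable (count_space A) g"
    using assms by (intro integrableI_bounded) (auto simp: top.not_eq_extremum)
  then have "Infinite_Set_Sum.abs_summable_on g A"
    by (simp add: Infinite_Set_Sum.abs_summable_on_def)
  then have "(\<lambda>x. norm (g x)) summable_on A"
    using abs_summable_equivalent by blast
  then show ?thesis
    by simp
qed

lemma abs_infsum_le_if_nn_integral_le:
  fixes c :: "'i \<Rightarrow> real"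
  assumes "(\<integral>\<^sup>+x. ennreal \<bar>c x\<bar> \<partial>count_space A) \<le> ennreal K" and "0 \<le> K"
  shows "\<bar>infsum c A\<bar> \<le> K"
proof -
  have summable: "(\<lambda>x. \<bar>c x\<bar>) summable_on A"
    using neq_top_trans[OF ennreal_neq_top assms(1)]
    by (intro abs_summable_on_if_nn_integral_finite) (simp add: infinity_ennreal_def)
  have "\<bar>infsum c A\<bar> \<le> (\<Sum>\<^sub>\<infinity>x\<in>A. \<bar>c x\<bar>)"
    using norm_infsum_bound[of c A] summable by simp
  also have "\<dots> \<le> K"
    using assms nn_integral_count_space_eq_infsum[OF summable] by (simp add: ennreal_le_iff)
  finally show ?thesis .
qed

lemma abs_infsum_infsum_le_if_nn_integral_le:
  fixes c :: "'i \<Rightarrow> 'j \<Rightarrow> real"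
  assumes bound: "(\<integral>\<^sup>+i. \<integral>\<^sup>+j. ennreal \<bar>c i j\<bar> \<partial>count_space B \<partial>count_space A) \<le> ennreal K"
    and "0 \<le> K"
  shows "\<bar>\<Sum>\<^sub>\<infinity>i\<in>A. \<Sum>\<^sub>\<infinity>j\<in>B. c i j\<bar> \<le> K"
proof (rule abs_infsum_le_if_nn_integral_le[OF _ \<open>0 \<le> K\<close>])
  have row_finite: "(\<integral>\<^sup>+j. ennreal \<bar>c i j\<bar> \<partial>count_space B) \<noteq> \<infinity>" if "i \<in> A" for i
  proof -
    have "(\<integral>\<^sup>+j. ennreal \<bar>c i j\<bar> \<partial>count_space B)
        = (\<integral>\<^sup>+i'. (\<integral>\<^sup>+j. ennreal \<bar>c i' j\<bar> \<partial>count_space B) * indicator {i} i' \<partial>count_space A)"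
      using that by (subst nn_integral_count_space'[of "{i}"]) auto
    also have "\<dots> \<le> ennreal K"
      by (intro order.trans[OF _ bound] nn_integral_mono) (auto simp: indicator_def)
    finally show ?thesis
      using neq_top_trans[OF ennreal_neq_top] by (simp add: infinity_ennreal_def)
  qed
  have "ennreal \<bar>\<Sum>\<^sub>\<infinity>j\<in>B. c i j\<bar> \<le> (\<integral>\<^sup>+j. ennreal \<bar>c i j\<bar> \<partial>count_space B)" if "i \<in> A" for i
  proof -
    have row: "ennreal (enn2real (\<integral>\<^sup>+j. ennreal \<bar>c i j\<bar> \<partial>count_space B))
        = (\<integral>\<^sup>+j. ennreal \<bar>c i j\<bar> \<partial>count_space B)"
      using row_finite[OF that] by (simp add: less_top infinity_ennreal_def)
    have "\<bar>\<Sum>\<^sub>\<infinity>j\<in>B. c i j\<bar> \<le> enn2real (\<integral>\<^sup>+j. ennreal \<bar>c i j\<bar> \<partial>count_space B)"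
      by (rule abs_infsum_le_if_nn_integral_le) (simp_all only: row order_refl enn2real_nonneg)
    then show ?thesis
      using row ennreal_leI by metis
  qed
  then show "(\<integral>\<^sup>+i. ennreal \<bar>\<Sum>\<^sub>\<infinity>j\<in>B. c i j\<bar> \<partial>count_space A) \<le> ennreal K"
    by (intro order.trans[OF _ bound] nn_integral_mono) auto
qed

lemma schur_row_sum_bound:
  fixes \<alpha> :: "'i \<Rightarrow> 'i \<Rightarrow> 'a \<Rightarrow> real" and \<phi> :: "'i \<Rightarrow> 'a \<Rightarrow> real"
  assumes "countable I"
    and \<alpha>_nonneg: "\<And>i j x. 0 \<le> \<alpha> i j x"
    and \<alpha>_meas: "\<And>i j. i \<in> I \<Longrightarrow> j \<in> I \<Longrightarrow> \<alpha> i j \<in> borel_measurable N"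
    and \<phi>_meas: "\<And>i. i \<in> I \<Longrightarrow> \<phi> i \<in> borel_measurable N"
    and row_sum: "\<And>i. i \<in> I \<Longrightarrow> AE x in N. (\<integral>\<^sup>+j. ennreal (\<alpha> i j x) \<partial>count_space I) \<le> ennreal M"
  shows "(\<integral>\<^sup>+i. \<integral>\<^sup>+j. \<integral>\<^sup>+x. ennreal (\<alpha> i j x * (\<phi> i x)\<^sup>2) \<partial>N \<partial>count_space I \<partial>count_space I)
      \<le> ennreal M * (\<integral>\<^sup>+i. \<integral>\<^sup>+x. ennreal ((\<phi> i x)\<^sup>2) \<partial>N \<partial>count_space I)"
proof -
  have "(\<integral>\<^sup>+j. \<integral>\<^sup>+x. ennreal (\<alpha> i j x * (\<phi> i x)\<^sup>2) \<partial>N \<partial>count_space I)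
      \<le> ennreal M * (\<integral>\<^sup>+x. ennreal ((\<phi> i x)\<^sup>2) \<partial>N)" if i: "i \<in> I" for i
  proof -
    have "(\<integral>\<^sup>+j. \<integral>\<^sup>+x. ennreal (\<alpha> i j x * (\<phi> i x)\<^sup>2) \<partial>N \<partial>count_space I)
        = (\<integral>\<^sup>+x. \<integral>\<^sup>+j. ennreal (\<alpha> i j x * (\<phi> i x)\<^sup>2) \<partial>count_space I \<partial>N)"
      using assms i by (intro nn_integral_count_space_nn_integral[symmetric]) auto
    also have "\<dots> = (\<integral>\<^sup>+x. (\<integral>\<^sup>+j. ennreal (\<alpha> i j x) \<partial>count_space I) * ennreal ((\<phi> i x)\<^sup>2) \<partial>N)"
      by (intro nn_integral_cong, subst nn_integral_multc[symmetric])
        (auto simp: ennreal_mult \<alpha>_nonneg)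
    also have "\<dots> \<le> (\<integral>\<^sup>+x. ennreal M * ennreal ((\<phi> i x)\<^sup>2) \<partial>N)"
      using row_sum[OF i] by (intro nn_integral_mono_AE) (auto elim!: eventually_mono intro: mult_right_mono)
    also have "\<dots> = ennreal M * (\<integral>\<^sup>+x. ennreal ((\<phi> i x)\<^sup>2) \<partial>N)"
      using \<phi>_meas[OF i] by (intro nn_integral_cmult) auto
    finally show ?thesis .
  qed
  then have "(\<integral>\<^sup>+i. \<integral>\<^sup>+j. \<integral>\<^sup>+x. ennreal (\<alpha> i j x * (\<phi> i x)\<^sup>2) \<partial>N \<partial>count_space I \<partial>count_space I)
      \<le> (\<integral>\<^sup>+i. ennreal M * (\<integral>\<^sup>+x. ennreal ((\<phi> i x)\<^sup>2) \<partial>N) \<partial>count_space I)"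
    by (intro nn_integral_mono) auto
  also have "\<dots> = ennreal M * (\<integral>\<^sup>+i. \<integral>\<^sup>+x. ennreal ((\<phi> i x)\<^sup>2) \<partial>N \<partial>count_space I)"
    by (intro nn_integral_cmult) auto
  finally show ?thesis .
qed

lemma ennreal_mult_le_amgm:
  fixes t w p q :: real
  assumes "0 < t" and "0 \<le> w"
  shows "ennreal (w * p * q) \<le> ennreal (t/2) * ennreal (w * p\<^sup>2) + ennreal (1/(2*t)) * ennreal (w * q\<^sup>2)"
proof -
  have "2 * t * (p * q) \<le> (t * p)\<^sup>2 + q\<^sup>2"
    using sum_squares_bound[of "t * p" q] by (simp add: power2_eq_square algebra_simps)
  then have "p * q \<le> t/2 * p\<^sup>2 + 1/(2*t) * q\<^sup>2"
    using \<open>0 < t\<close> by (simp add: field_simps power2_eq_square)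
  then have "w * p * q \<le> t/2 * (w * p\<^sup>2) + 1/(2*t) * (w * q\<^sup>2)"
    using mult_left_mono[OF _ \<open>0 \<le> w\<close>] by (fastforce simp: algebra_simps)
  then show ?thesis
    using assms by (simp add: ennreal_mult[symmetric] ennreal_plus[symmetric] del: ennreal_plus)
qed

lemma schur_test_amgm:
  fixes \<alpha> :: "'i \<Rightarrow> 'i \<Rightarrow> 'a \<Rightarrow> real" and f h :: "'i \<Rightarrow> 'a \<Rightarrow> real"
  assumes I: "countable I"
    and \<alpha>_nonneg: "\<And>i j x. 0 \<le> \<alpha> i j x"
    and \<alpha>_sym: "\<And>i j. i \<in> I \<Longrightarrow> j \<in> I \<Longrightarrow> \<alpha> i j = \<alpha> j i"
    and \<alpha>_meas: "\<And>i j. i \<in> I \<Longrightarrow> j \<in> I \<Longrightarrow> \<alpha> i j \<in> borel_measurable N"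
    and f_meas: "\<And>i. i \<in> I \<Longrightarrow> f i \<in> borel_measurable N"
    and h_meas: "\<And>i. i \<in> I \<Longrightarrow> h i \<in> borel_measurable N"
    and row_sum: "\<And>i. i \<in> I \<Longrightarrow> AE x in N. (\<integral>\<^sup>+j. ennreal (\<alpha> i j x) \<partial>count_space I) \<le> ennreal M"
    and "0 < t"
  shows "(\<integral>\<^sup>+i. \<integral>\<^sup>+j. \<integral>\<^sup>+x. ennreal (\<alpha> i j x * f j x * h i x) \<partial>N \<partial>count_space I \<partial>count_space I)
      \<le> ennreal (t/2) * (ennreal M * (\<integral>\<^sup>+i. \<integral>\<^sup>+x. ennreal ((f i x)\<^sup>2) \<partial>N \<partial>count_space I))
        + ennreal (1/(2*t)) * (ennreal M * (\<integral>\<^sup>+i. \<integral>\<^sup>+x. ennreal ((h i x)\<^sup>2) \<partial>N \<partial>count_space I))"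
proof -
  let ?F = "\<integral>\<^sup>+i. \<integral>\<^sup>+j. \<integral>\<^sup>+x. ennreal (\<alpha> i j x * (f j x)\<^sup>2) \<partial>N \<partial>count_space I \<partial>count_space I"
  let ?H = "\<integral>\<^sup>+i. \<integral>\<^sup>+j. \<integral>\<^sup>+x. ennreal (\<alpha> i j x * (h i x)\<^sup>2) \<partial>N \<partial>count_space I \<partial>count_space I"
  have split: "(\<integral>\<^sup>+x. ennreal (t/2) * ennreal (\<alpha> i j x * (f j x)\<^sup>2)
        + ennreal (1/(2*t)) * ennreal (\<alpha> i j x * (h i x)\<^sup>2) \<partial>N)
      = ennreal (t/2) * (\<integral>\<^sup>+x. ennreal (\<alpha> i j x * (f j x)\<^sup>2) \<partial>N)
        + ennreal (1/(2*t)) * (\<integral>\<^sup>+x. ennreal (\<alpha> i j x * (h i x)\<^sup>2) \<partial>N)"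
    if "i \<in> I" "j \<in> I" for i j
    using \<alpha>_meas[OF that] f_meas[OF that(2)] h_meas[OF that(1)]
    by (subst nn_integral_add) (auto simp: nn_integral_cmult)
  have "(\<integral>\<^sup>+i. \<integral>\<^sup>+j. \<integral>\<^sup>+x. ennreal (\<alpha> i j x * f j x * h i x) \<partial>N \<partial>count_space I \<partial>count_space I)
      \<le> (\<integral>\<^sup>+i. \<integral>\<^sup>+j. \<integral>\<^sup>+x. ennreal (t/2) * ennreal (\<alpha> i j x * (f j x)\<^sup>2)
          + ennreal (1/(2*t)) * ennreal (\<alpha> i j x * (h i x)\<^sup>2) \<partial>N \<partial>count_space I \<partial>count_space I)"
    using \<open>0 < t\<close> \<alpha>_nonneg by (intro nn_integral_mono ennreal_mult_le_amgm)
  also have "\<dots> = (\<integral>\<^sup>+i. \<integral>\<^sup>+j. ennreal (t/2) * (\<integral>\<^sup>+x. ennreal (\<alpha> i j x * (f j x)\<^sup>2) \<partial>N)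
          + ennreal (1/(2*t)) * (\<integral>\<^sup>+x. ennreal (\<alpha> i j x * (h i x)\<^sup>2) \<partial>N) \<partial>count_space I \<partial>count_space I)"
    using split by (intro nn_integral_cong) auto
  also have "\<dots> = ennreal (t/2) * ?F + ennreal (1/(2*t)) * ?H"
    by (simp add: nn_integral_add nn_integral_cmult)
  also have "?F = (\<integral>\<^sup>+j. \<integral>\<^sup>+i. \<integral>\<^sup>+x. ennreal (\<alpha> j i x * (f j x)\<^sup>2) \<partial>N \<partial>count_space I \<partial>count_space I)"
    using I \<alpha>_sym by (subst nn_integral_count_space_nn_integral) (auto intro!: nn_integral_cong)
  also have "\<dots> \<le> ennreal M * (\<integral>\<^sup>+i. \<integral>\<^sup>+x. ennreal ((f i x)\<^sup>2) \<partial>N \<partial>count_space I)"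
    by (rule schur_row_sum_bound[OF I \<alpha>_nonneg \<alpha>_meas f_meas row_sum])
  also have "?H \<le> ennreal M * (\<integral>\<^sup>+i. \<integral>\<^sup>+x. ennreal ((h i x)\<^sup>2) \<partial>N \<partial>count_space I)"
    by (rule schur_row_sum_bound[OF I \<alpha>_nonneg \<alpha>_meas h_meas row_sum])
  finally show ?thesis
    by (simp add: add_mono mult_left_mono)
qed

lemma le_mult_if_le_amgm:
  fixes e x y :: real
  assumes "0 \<le> x" and "0 \<le> y" and amgm: "\<And>t. 0 < t \<Longrightarrow> e \<le> t/2 * x\<^sup>2 + 1/(2*t) * y\<^sup>2"
  shows "e \<le> x * y"
proof (cases "0 < x \<and> 0 < y")
  case True
  then show ?thesis
    using amgm[of "y / x"] by (simp add: field_simps power2_eq_square)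
next
  case False
  then have "x = 0 \<or> y = 0"
    using assms(1,2) by auto
  show ?thesis
  proof (rule ccontr)
    assume "\<not> e \<le> x * y"
    then have "0 < e"
      using \<open>x = 0 \<or> y = 0\<close> by auto
    then have "0 < (y\<^sup>2 + 1) / e" and "0 < e / (x\<^sup>2 + 1)"
      by (simp_all add: add_nonneg_pos)
    moreover have "e * z\<^sup>2 / (2 + 2 * z\<^sup>2) < e" for z
    proof -
      have "e * z\<^sup>2 < e * (2 + 2 * z\<^sup>2)"
        using \<open>0 < e\<close> by (intro mult_strict_left_mono) (auto simp: add_nonneg_pos)
      then show ?thesis
        by (subst pos_divide_less_eq) (auto simp: add_pos_nonneg)
    qed
    then have "1/(2 * ((y\<^sup>2 + 1) / e)) * y\<^sup>2 < e" and "e / (x\<^sup>2 + 1) / 2 * x\<^sup>2 < e"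
      using \<open>0 < e\<close> by (simp_all add: field_simps)
    ultimately show False
      using \<open>x = 0 \<or> y = 0\<close> amgm by fastforce
  qed
qed

lemma schur_test:
  fixes \<alpha> :: "'i \<Rightarrow> 'i \<Rightarrow> 'a \<Rightarrow> real" and f h :: "'i \<Rightarrow> 'a \<Rightarrow> real"
  assumes I: "countable I"
    and \<alpha>_nonneg: "\<And>i j x. 0 \<le> \<alpha> i j x"
    and \<alpha>_sym: "\<And>i j. i \<in> I \<Longrightarrow> j \<in> I \<Longrightarrow> \<alpha> i j = \<alpha> j i"
    and \<alpha>_meas: "\<And>i j. i \<in> I \<Longrightarrow> j \<in> I \<Longrightarrow> \<alpha> i j \<in> borel_measurable N"
    and f_meas: "\<And>i. i \<in> I \<Longrightarrow> f i \<in> borel_measurable N"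
    and h_meas: "\<And>i. i \<in> I \<Longrightarrow> h i \<in> borel_measurable N"
    and row_sum: "\<And>i. i \<in> I \<Longrightarrow> AE x in N. (\<integral>\<^sup>+j. ennreal (\<alpha> i j x) \<partial>count_space I) \<le> ennreal M"
    and "0 \<le> M"
    and f_norm: "(\<integral>\<^sup>+i. \<integral>\<^sup>+x. ennreal ((f i x)\<^sup>2) \<partial>N \<partial>count_space I) \<le> ennreal (F\<^sup>2)" and "0 \<le> F"
    and h_norm: "(\<integral>\<^sup>+i. \<integral>\<^sup>+x. ennreal ((h i x)\<^sup>2) \<partial>N \<partial>count_space I) \<le> ennreal (H\<^sup>2)" and "0 \<le> H"
  shows "(\<integral>\<^sup>+i. \<integral>\<^sup>+j. \<integral>\<^sup>+x. ennreal (\<alpha> i j x * f j x * h i x) \<partial>N \<partial>count_space I \<partial>count_space I)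
      \<le> ennreal (M * F * H)"
    (is "?E \<le> _")
proof -
  have amgm: "?E \<le> ennreal (t/2 * (sqrt M * F)\<^sup>2 + 1/(2*t) * (sqrt M * H)\<^sup>2)" if "0 < t" for t
  proof -
    have "?E \<le> ennreal (t/2) * (ennreal M * (\<integral>\<^sup>+i. \<integral>\<^sup>+x. ennreal ((f i x)\<^sup>2) \<partial>N \<partial>count_space I))
        + ennreal (1/(2*t)) * (ennreal M * (\<integral>\<^sup>+i. \<integral>\<^sup>+x. ennreal ((h i x)\<^sup>2) \<partial>N \<partial>count_space I))"
      by (rule schur_test_amgm[of I \<alpha> N f h M t]) (use assms that in auto)
    also have "\<dots> \<le> ennreal (t/2) * (ennreal M * ennreal (F\<^sup>2)) + ennreal (1/(2*t)) * (ennreal M * ennreal (H\<^sup>2))"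
      by (intro add_mono mult_left_mono f_norm h_norm) auto
    also have "\<dots> = ennreal (t/2 * (sqrt M * F)\<^sup>2 + 1/(2*t) * (sqrt M * H)\<^sup>2)"
      using that \<open>0 \<le> M\<close>
      by (simp add: power_mult_distrib ennreal_mult[symmetric] ennreal_plus[symmetric] del: ennreal_plus)
    finally show ?thesis .
  qed
  have "?E \<noteq> top"
    using neq_top_trans[OF ennreal_neq_top amgm[of 1]] by simp
  then have E: "?E = ennreal (enn2real ?E)"
    by (simp add: less_top)
  have "enn2real ?E \<le> sqrt M * F * (sqrt M * H)"
    using \<open>0 \<le> M\<close> \<open>0 \<le> F\<close> \<open>0 \<le> H\<close> amgm
    by (intro le_mult_if_le_amgm enn2real_leI) (auto intro: add_nonneg_nonneg)
  also have "\<dots> = M * F * H"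
    using \<open>0 \<le> M\<close> by (simp add: algebra_simps)
  finally show ?thesis
    by (subst E) (rule ennreal_leI)
qed

lemma countable_FF: "countable (FF :: ('m::countable \<Rightarrow> nat) set)"
proof -
  define graph where "graph \<nu> = {(\<mu>, \<nu> \<mu>) | \<mu>. \<nu> \<mu> \<noteq> 0}" for \<nu> :: "'m \<Rightarrow> nat"
  have "inj graph"
  proof (rule injI)
    fix \<nu> \<nu>' assume "graph \<nu> = graph \<nu>'"
    then have "(\<mu>, n) \<in> graph \<nu> \<longleftrightarrow> (\<mu>, n) \<in> graph \<nu>'" for \<mu> n
      by simp
    then have "\<nu> \<mu> = \<nu>' \<mu>" for \<mu>
      by (simp add: graph_def) (metis neq0_conv)
    then show "\<nu> = \<nu>'" by auto
  qed
  moreover have "graph ` FF \<subseteq> Collect finite"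
  proof
    fix S assume "S \<in> graph ` FF"
    then obtain \<nu> where "\<nu> \<in> FF" and "S = (\<lambda>\<mu>. (\<mu>, \<nu> \<mu>)) ` {\<mu>. \<nu> \<mu> \<noteq> 0}"
      by (auto simp: graph_def)
    then show "S \<in> Collect finite" by (simp add: FF_def)
  qed
  ultimately show ?thesis
    by (meson countable_Collect_finite countable_image_inj_on countable_subset inj_on_subset subset_UNIV)
qed

lemma VVnorm_nonneg: "0 \<le> VVnorm D g"
  by (simp add: VVnorm_def infsum_nonneg integral_nonneg_AE)

lemma nn_integral_norm_sq_eq_VVnorm_sq:
  assumes "inVV D u g"
  shows "(\<integral>\<^sup>+\<nu>. \<integral>\<^sup>+x. ennreal ((norm (g \<nu> x))\<^sup>2) \<partial>lebesgue_on D \<partial>count_space FF) = ennreal ((VVnorm D g)\<^sup>2)"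
proof -
  have "sqint D (g \<nu>)" if "\<nu> \<in> FF" for \<nu>
    using assms that by (auto simp: inVV_def H01_def)
  then have "(\<integral>\<^sup>+\<nu>. \<integral>\<^sup>+x. ennreal ((norm (g \<nu> x))\<^sup>2) \<partial>lebesgue_on D \<partial>count_space FF)
      = (\<integral>\<^sup>+\<nu>. ennreal (integral\<^sup>L (lebesgue_on D) (\<lambda>x. (norm (g \<nu> x))\<^sup>2)) \<partial>count_space FF)"
    by (intro nn_integral_cong nn_integral_eq_integral) (auto simp: sqint_def)
  also have "\<dots> = ennreal (\<Sum>\<^sub>\<infinity>\<nu>\<in>FF. integral\<^sup>L (lebesgue_on D) (\<lambda>x. (norm (g \<nu> x))\<^sup>2))"
    using assms by (intro nn_integral_count_space_eq_infsum) (auto simp: inVV_def intro: integral_nonneg_AE)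
  also have "\<dots> = ennreal ((VVnorm D g)\<^sup>2)"
    by (simp add: VVnorm_def infsum_nonneg integral_nonneg_AE)
  finally show ?thesis .
qed

theorem lemma3p2:
  fixes D :: "'d::euclidean_space set"
    and a :: "('m::countable \<Rightarrow> nat) \<Rightarrow> ('m \<Rightarrow> nat) \<Rightarrow> 'd \<Rightarrow> real"
    and M :: real
  assumes "0 \<le> M" and "open D" and "connected D" and "D \<noteq> {}"
    and "\<forall>\<nu>\<in>FF. \<forall>\<nu>'\<in>FF. Linf D (a \<nu> \<nu>')"
    and "\<forall>\<nu>\<in>FF. \<forall>\<nu>'\<in>FF. a \<nu> \<nu>' = a \<nu>' \<nu>"
    and "\<forall>\<nu>\<in>FF. AE x in lebesgue_on D.
           (\<Sum>\<^sub>\<infinity>\<nu>'\<in>FF. ennreal \<bar>a \<nu> \<nu>' x\<bar>) \<le> ennreal M"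
  shows "\<forall>uv gv uw gw. inVV D uv gv \<longrightarrow> inVV D uw gw \<longrightarrow>
           \<bar>Bform D a gv gw\<bar> \<le> M * VVnorm D gv * VVnorm D gw"
proof (intro allI impI)
  fix uv uw :: "('m \<Rightarrow> nat) \<Rightarrow> 'd \<Rightarrow> real" and gv gw :: "('m \<Rightarrow> nat) \<Rightarrow> 'd \<Rightarrow> 'd"
  assume v: "inVV D uv gv" and w: "inVV D uw gw"
  have meas: "gv \<nu> \<in> borel_measurable (lebesgue_on D)" "gw \<nu> \<in> borel_measurable (lebesgue_on D)"
    if "\<nu> \<in> FF" for \<nu>
    using v w that by (auto simp: inVV_def H01_def sqint_def)
  have a_meas: "(\<lambda>x. \<bar>a \<nu> \<nu>' x\<bar>) \<in> borel_measurable (lebesgue_on D)" if "\<nu> \<in> FF" "\<nu>' \<in> FF" for \<nu> \<nu>'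
    using assms(5) that unfolding Linf_def by (auto intro: borel_measurable_abs)
  have row_sum: "AE x in lebesgue_on D. (\<integral>\<^sup>+\<nu>'. ennreal \<bar>a \<nu> \<nu>' x\<bar> \<partial>count_space FF) \<le> ennreal M"
    if "\<nu> \<in> FF" for \<nu>
    using bspec[OF assms(7) that]
    by (rule eventually_mono) (rule nn_integral_count_space_le_if_infsum_le[OF _ _ assms(1)], auto)
  have "(\<integral>\<^sup>+\<nu>. \<integral>\<^sup>+\<nu>'. ennreal \<bar>integral\<^sup>L (lebesgue_on D) (\<lambda>x. a \<nu> \<nu>' x * (gv \<nu>' x \<bullet> gw \<nu> x))\<bar>
        \<partial>count_space FF \<partial>count_space FF)
      \<le> (\<integral>\<^sup>+\<nu>. \<integral>\<^sup>+\<nu>'. \<integral>\<^sup>+x. ennreal (\<bar>a \<nu> \<nu>' x\<bar> * norm (gv \<nu>' x) * norm (gw \<nu> x))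
        \<partial>lebesgue_on D \<partial>count_space FF \<partial>count_space FF)"
    by (intro nn_integral_mono order.trans[OF ennreal_abs_integral_le_nn_integral] ennreal_leI)
      (simp add: abs_mult mult.assoc mult_left_mono Cauchy_Schwarz_ineq2)
  also have "\<dots> \<le> ennreal (M * VVnorm D gv * VVnorm D gw)"
    using assms(1,6) countable_FF a_meas row_sum meas
    by (intro schur_test)
      (auto simp: nn_integral_norm_sq_eq_VVnorm_sq[OF v] nn_integral_norm_sq_eq_VVnorm_sq[OF w] VVnorm_nonneg)
  finally show "\<bar>Bform D a gv gw\<bar> \<le> M * VVnorm D gv * VVnorm D gw"
    unfolding Bform_def
    by (rule abs_infsum_infsum_le_if_nn_integral_le) (simp add: assms(1) VVnorm_nonneg)
qed

end
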